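(* For every $\varepsilon \in (0,1]$, $$\inf_{\mu} \sup_{j \geq 1} |\widehat\mu(j)| \;\geq\; \frac{\pi\varepsilon}{8 + 2\pi\varepsilon} \;\geq\; \frac{\varepsilon}{5},$$ where the infimum is over all Borel probability measures $\mu$ on $\mathbf{R}$ with $\mu([\varepsilon,1]) = 1$, and the supremum is over all positive integers $j$.
   Context: For a finite Borel measure $\mu$ on $\mathbf{R}$, its Fourier transform is $\widehat\mu(\xi) = \int e^{-2\pi i \xi x}\,d\mu(x)$ for $\xi \in \mathbf{R}$. *)

theory Defs
  imports "HOL-Probability.Probability"
begin

definition fourier_measure :: "real measure \<Rightarrow> real \<Rightarrow> complex" where
  "fourier_measure \<mu> \<xi> = integral\<^sup>L \<mu> (\<lambda>x. exp (- (2 * pi * \<i> * complex_of_real (\<xi> * x))))"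

end

theory Submission
  imports Defs
begin

(* Suppose |hat mu(j)| <= delta for all j >= 1; write e(t) = exp(2 pi i t) and
   D_N(y) = sum_{k<N} e(k y).  Integrate against mu the nonnegative trigonometric polynomial
     G(x) = (N K^2)^-1 sum_{a,b<K} |D_N(x - m - (a+b) h)|^2,
   whose constant Fourier coefficient is 1.  For x in [eps,1] all shifts x - m - (a+b) h lie in
   [m, 1-m], where |D_N| <= 1/sin(pi m), so int G dmu <= 1/(N sin^2(pi m)) is small.  On the
   other hand int G dmu = 1 + sum_{k~=l} c_kl hat mu(l-k), and averaging over the K^2 shifts
   makes |c_kl| <= N^-1 min(1, s^2/(k-l)^2) with s ~ 2/(pi eps), so the off-diagonal part is at
   most delta (4 s + 2).  Letting m -> 0 and N, K -> infinity gives delta >= pi eps/(8 + 2 pi eps). *)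

definition dirichlet_sum :: "nat \<Rightarrow> real \<Rightarrow> complex" where
  "dirichlet_sum n y = (\<Sum>k<n. cis (2 * pi * real k * y))"

lemma dirichlet_sum_0 [simp]: "dirichlet_sum n 0 = of_nat n"
  by (simp add: dirichlet_sum_def)

lemma dirichlet_sum_square:
  "(dirichlet_sum n y)\<^sup>2 = (\<Sum>a<n. \<Sum>b<n. cis (2 * pi * real a * y) * cis (2 * pi * real b * y))"
  by (simp add: dirichlet_sum_def power2_eq_square sum_product)

lemma norm_1_minus_cis_double: "cmod (1 - cis (2 * t)) = 2 * \<bar>sin t\<bar>"
proof -
  have "(cmod (1 - cis (2 * t)))\<^sup>2 = (1 - cos (2 * t))\<^sup>2 + (sin (2 * t))\<^sup>2"
    by (simp add: cmod_def)
  also have "\<dots> = 4 * (sin t)\<^sup>2 * ((sin t)\<^sup>2 + (cos t)\<^sup>2)"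
    unfolding cos_double_sin sin_double power2_eq_square by algebra
  also have "\<dots> = (2 * \<bar>sin t\<bar>)\<^sup>2"
    by (simp add: power_mult_distrib)
  finally show ?thesis
    by (subst (asm) power2_eq_iff_nonneg) auto
qed

lemma norm_dirichlet_sum_le: "cmod (dirichlet_sum n y) \<le> n"
proof -
  have "cmod (dirichlet_sum n y) \<le> (\<Sum>k<n. cmod (cis (2 * pi * real k * y)))"
    unfolding dirichlet_sum_def by (rule norm_sum)
  then show ?thesis by simp
qed

lemma norm_dirichlet_sum_le_inverse_sin:
  assumes "sin (pi * y) \<noteq> 0"
  shows "cmod (dirichlet_sum n y) \<le> 1 / \<bar>sin (pi * y)\<bar>"
proof -
  define z where "z = cis (2 * pi * y)"
  have "cis (2 * pi * real k * y) = z ^ k" for k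
    using Complex.DeMoivre[of "2 * pi * y" k] by (simp add: z_def mult_ac)
  then have sum_eq: "dirichlet_sum n y = (1 - z ^ n) / (1 - z)"
    using assms norm_1_minus_cis_double[of "pi * y"]
    by (auto simp: dirichlet_sum_def z_def sum_gp_strict mult_ac)
  have "cmod (1 - z ^ n) \<le> 2"
    using norm_triangle_ineq4[of 1 "z ^ n"] by (simp add: z_def norm_power)
  moreover have "cmod (1 - z) = 2 * \<bar>sin (pi * y)\<bar>"
    using norm_1_minus_cis_double[of "pi * y"] by (simp add: z_def mult_ac)
  ultimately show ?thesis
    using assms divide_right_mono[of "cmod (1 - z ^ n)" 2 "2 * \<bar>sin (pi * y)\<bar>"]
    by (simp add: sum_eq norm_divide)
qed

lemma norm_dirichlet_sum_squared:
  "complex_of_real ((cmod (dirichlet_sum n y))\<^sup>2)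
     = (\<Sum>k<n. \<Sum>l<n. cis (2 * pi * (real k - real l) * y))"
proof -
  have "complex_of_real ((cmod (dirichlet_sum n y))\<^sup>2)
        = (\<Sum>k<n. cis (2 * pi * real k * y)) * (\<Sum>l<n. cis (- (2 * pi * real l * y)))"
    by (simp only: complex_norm_square) (simp add: dirichlet_sum_def cnj_sum cis_cnj)
  also have "\<dots> = (\<Sum>k<n. \<Sum>l<n. cis (2 * pi * real k * y) * cis (- (2 * pi * real l * y)))"
    by (rule sum_product)
  also have "\<dots> = (\<Sum>k<n. \<Sum>l<n. cis (2 * pi * (real k - real l) * y))"
    by (simp add: cis_mult algebra_simps)
  finally show ?thesis .
qed

lemma sin_pi_ge_on_margin:
  assumes "0 < m" "m \<le> y" "y \<le> 1 - m"
  shows "sin (pi * m) \<le> sin (pi * y)"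
proof -
  have mono: "sin (pi * m) \<le> sin (pi * t)" if "m \<le> t" "t \<le> 1 / 2" for t
  proof -
    have "0 \<le> pi * m" "0 \<le> pi * t"
      using that assms by auto
    moreover have "pi * m \<le> pi * t" "pi * t \<le> pi / 2"
      using that by auto
    ultimately show ?thesis
      using pi_gt_zero sin_mono_le_eq[of "pi * m" "pi * t"] by linarith
  qed
  have "sin (pi * y) = sin (pi * (1 - y))"
    by (simp add: right_diff_distrib)
  then show ?thesis
    using mono[of y] mono[of "1 - y"] assms by (cases "y \<le> 1 / 2") auto
qed

lemma sin_ge_linear:
  fixes u t :: real
  assumes "0 \<le> u" "u \<le> t" "t \<le> 1"
  shows "u * (1 - t) \<le> sin u"
proof -
  have "\<bar>sin u - (\<Sum>m<3. sin_coeff m * u ^ m)\<bar> \<le> inverse (fact 3) * \<bar>u\<bar> ^ 3"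
    by (rule Maclaurin_sin_bound)
  then have "\<bar>sin u - u\<bar> \<le> u ^ 3 / 6"
    using assms by (simp add: sin_coeff_def eval_nat_numeral fact_numeral)
  then have "u - u ^ 3 / 6 \<le> sin u"
    by linarith
  moreover have "u ^ 3 \<le> u * t"
    using assms mult_left_mono[of "u * u" t u] mult_mono[of u t u 1]
    by (simp add: power3_eq_cube mult.assoc)
  moreover have "0 \<le> u * t"
    using assms by simp
  ultimately show ?thesis
    unfolding right_diff_distrib by linarith
qed

lemma norm_dirichlet_sum_le_small_freq:
  assumes "y \<noteq> 0" "pi * \<bar>y\<bar> \<le> \<tau>" "\<tau> < 1"
  shows "cmod (dirichlet_sum n y) \<le> 1 / (pi * \<bar>y\<bar> * (1 - \<tau>))"
proof -
  have pos: "0 < pi * \<bar>y\<bar> * (1 - \<tau>)"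
    using assms by simp
  have "pi * \<bar>y\<bar> * (1 - \<tau>) \<le> sin (pi * \<bar>y\<bar>)"
    by (rule sin_ge_linear) (use assms in auto)
  moreover have "\<bar>sin (pi * y)\<bar> = sin (pi * \<bar>y\<bar>)"
    using pos calculation by (cases "y \<ge> 0") auto
  ultimately show ?thesis
    using norm_dirichlet_sum_le_inverse_sin[of y n] pos
    by (smt (verit) frac_le)
qed

lemma sum_inverse_square_tail_le:
  assumes "1 \<le> J"
  shows "(\<Sum>j\<in>{J<..n}. 1 / (real j)\<^sup>2) \<le> 1 / real J - 1 / real (max J n)"
proof (induction n)
  case 0
  then show ?case by simp
next
  case (Suc n)
  show ?case
  proof (cases "J \<le> n")
    case True
    then have "1 / real n - 1 / real (Suc n) = 1 / (real n * real (Suc n))"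
      using assms by (simp add: field_simps)
    moreover have "1 / (real (Suc n))\<^sup>2 \<le> 1 / (real n * real (Suc n))"
      using True assms by (intro divide_left_mono) (auto simp: power2_eq_square)
    ultimately have "1 / (real (Suc n))\<^sup>2 \<le> 1 / real n - 1 / real (Suc n)"
      by simp
    moreover have "{J<..Suc n} = insert (Suc n) {J<..n}"
      using True by auto
    ultimately show ?thesis
      using Suc.IH True by (simp add: max_def)
  next
    case False
    then have "{J<..Suc n} = {}" "max J (Suc n) = J"
      by auto
    then show ?thesis
      by simp
  qed
qed

lemma sum_min_inverse_square_le:
  fixes s :: real
  assumes "0 < s"
  shows "(\<Sum>j\<in>{1..n}. min 1 (s\<^sup>2 / (real j)\<^sup>2)) \<le> 2 * s + 1"
proof -
  define J where "J = nat \<lceil>s\<rceil>"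
  have J: "s \<le> real J" "real J < s + 1" "1 \<le> J"
    unfolding J_def using assms by linarith+
  let ?f = "\<lambda>j::nat. min 1 (s\<^sup>2 / (real j)\<^sup>2)"
  have "(\<Sum>j\<in>{1..n}. ?f j) \<le> (\<Sum>j\<in>{1..J} \<union> {J<..n}. ?f j)"
    by (rule sum_mono2) auto
  also have "\<dots> = (\<Sum>j\<in>{1..J}. ?f j) + (\<Sum>j\<in>{J<..n}. ?f j)"
    by (rule sum.union_disjoint) auto
  also have "(\<Sum>j\<in>{1..J}. ?f j) \<le> real J"
    using sum_mono[of "{1..J}" ?f "\<lambda>_. 1"] by simp
  also have "(\<Sum>j\<in>{J<..n}. ?f j) \<le> s\<^sup>2 * (\<Sum>j\<in>{J<..n}. 1 / (real j)\<^sup>2)"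
    by (simp add: sum_distrib_left sum_mono)
  also have "\<dots> \<le> s\<^sup>2 * (1 / real J)"
  proof (rule mult_left_mono)
    show "(\<Sum>j\<in>{J<..n}. 1 / (real j)\<^sup>2) \<le> 1 / real J"
      using sum_inverse_square_tail_le[OF J(3), of n] zero_le_divide_1_iff[of "real (max J n)"]
      by linarith
  qed simp
  also have "s\<^sup>2 * (1 / real J) \<le> s"
    using J assms by (simp add: power2_eq_square divide_le_eq mult_left_mono)
  finally show ?thesis
    using J by linarith
qed

lemma sum_off_diagonal_le_twice:
  fixes F :: "real \<Rightarrow> real"
  assumes F_nonneg: "\<And>x. 0 \<le> x \<Longrightarrow> 0 \<le> F x" and "k < N"
  shows "(\<Sum>l\<in>{..<N} - {k}. F ((real k - real l)\<^sup>2)) \<le> 2 * (\<Sum>j\<in>{1..N}. F ((real j)\<^sup>2))"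
proof -
  have split: "{..<N} - {k} = {..<k} \<union> {Suc k..<N}"
    using \<open>k < N\<close> by auto
  have "(\<Sum>l\<in>{..<N} - {k}. F ((real k - real l)\<^sup>2))
      = (\<Sum>l<k. F ((real k - real l)\<^sup>2)) + (\<Sum>l\<in>{Suc k..<N}. F ((real k - real l)\<^sup>2))"
    unfolding split by (rule sum.union_disjoint) auto
  also have "(\<Sum>l<k. F ((real k - real l)\<^sup>2)) = (\<Sum>j\<in>{1..k}. F ((real j)\<^sup>2))"
    by (rule sum.reindex_bij_witness[of _ "\<lambda>j. k - j" "\<lambda>l. k - l"]) (auto simp: of_nat_diff)
  also have "(\<Sum>l\<in>{Suc k..<N}. F ((real k - real l)\<^sup>2)) = (\<Sum>j\<in>{1..<N - k}. F ((real j)\<^sup>2))"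
    by (rule sum.reindex_bij_witness[of _ "\<lambda>j. j + k" "\<lambda>l. l - k"])
       (auto simp: of_nat_diff power2_commute)
  also have "(\<Sum>j\<in>{1..k}. F ((real j)\<^sup>2)) \<le> (\<Sum>j\<in>{1..N}. F ((real j)\<^sup>2))"
    by (rule sum_mono2) (use \<open>k < N\<close> in \<open>auto intro!: F_nonneg\<close>)
  also have "(\<Sum>j\<in>{1..<N - k}. F ((real j)\<^sup>2)) \<le> (\<Sum>j\<in>{1..N}. F ((real j)\<^sup>2))"
    by (rule sum_mono2) (auto intro!: F_nonneg)
  finally show ?thesis
    by simp
qed

lemma sum_swap_4:
  "(\<Sum>a\<in>A. \<Sum>b\<in>B. \<Sum>k\<in>C. \<Sum>l\<in>D. f a b k l) = (\<Sum>k\<in>C. \<Sum>l\<in>D. \<Sum>a\<in>A. \<Sum>b\<in>B. f a b k l)"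
proof -
  have "(\<Sum>a\<in>A. \<Sum>b\<in>B. \<Sum>k\<in>C. \<Sum>l\<in>D. f a b k l) = (\<Sum>a\<in>A. \<Sum>k\<in>C. \<Sum>b\<in>B. \<Sum>l\<in>D. f a b k l)"
    by (intro sum.cong refl sum.swap)
  also have "\<dots> = (\<Sum>a\<in>A. \<Sum>k\<in>C. \<Sum>l\<in>D. \<Sum>b\<in>B. f a b k l)"
    by (intro sum.cong refl sum.swap)
  also have "\<dots> = (\<Sum>k\<in>C. \<Sum>a\<in>A. \<Sum>l\<in>D. \<Sum>b\<in>B. f a b k l)"
    by (rule sum.swap)
  also have "\<dots> = (\<Sum>k\<in>C. \<Sum>l\<in>D. \<Sum>a\<in>A. \<Sum>b\<in>B. f a b k l)"
    by (intro sum.cong refl sum.swap)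
  finally show ?thesis .
qed

lemma fourier_measure_eq_char: "fourier_measure M \<xi> = char M (- 2 * pi * \<xi>)"
  unfolding fourier_measure_def char_def
  by (intro Bochner_Integration.integral_cong refl) (simp add: algebra_simps)

context real_distribution
begin

lemma integrable_cis: "integrable M (\<lambda>x. cis (2 * pi * c * x))"
  unfolding cis_conv_exp by (rule integrable_iexp) auto

lemma integral_cis: "integral\<^sup>L M (\<lambda>x. cis (2 * pi * c * x)) = fourier_measure M (- c)"
  unfolding fourier_measure_eq_char char_def cis_conv_exp by simp

lemma fourier_measure_0: "fourier_measure M 0 = 1"
  unfolding fourier_measure_eq_char by (simp add: char_zero)

lemma norm_fourier_measure_le_1: "cmod (fourier_measure M \<xi>) \<le> 1"
  unfolding fourier_measure_eq_char by (rule cmod_char_le_1)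

lemma fourier_measure_uminus: "fourier_measure M (- \<xi>) = cnj (fourier_measure M \<xi>)"
proof -
  have "fourier_measure M \<xi> = integral\<^sup>L M (\<lambda>x. cis (2 * pi * (- \<xi>) * x))"
    using integral_cis[of "- \<xi>"] by simp
  then have "cnj (fourier_measure M \<xi>) = integral\<^sup>L M (\<lambda>x. cnj (cis (2 * pi * (- \<xi>) * x)))"
    by simp
  also have "\<dots> = fourier_measure M (- \<xi>)"
    by (simp add: cis_cnj flip: integral_cis)
  finally show ?thesis ..
qed

lemma norm_fourier_measure_int_le:
  assumes "\<And>j::nat. 1 \<le> j \<Longrightarrow> cmod (fourier_measure M (real j)) \<le> \<delta>" "k \<noteq> l"
  shows "cmod (fourier_measure M (real l - real k)) \<le> \<delta>"
proof (cases "k < l")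
  case True
  then show ?thesis
    using assms(1)[of "l - k"] by (simp add: of_nat_diff)
next
  case False
  then have "real l - real k = - real (k - l)"
    by (simp add: of_nat_diff)
  then show ?thesis
    using assms(1)[of "k - l"] assms(2) False by (simp only: fourier_measure_uminus complex_mod_cnj)
qed

lemma integral_trig_poly:
  "integral\<^sup>L M (\<lambda>x. \<Sum>k<N. \<Sum>l<N. C k l * cis (2 * pi * (real k - real l) * x))
     = (\<Sum>k<N. \<Sum>l<N. C k l * fourier_measure M (real l - real k))"
  by (simp add: integrable_cis integral_cis
      flip: Bochner_Integration.integral_sum Bochner_Integration.integral_mult_right_zero)

lemma trig_poly_duality:
  fixes G :: "real \<Rightarrow> real" and C :: "nat \<Rightarrow> nat \<Rightarrow> complex" and w :: "nat \<Rightarrow> nat \<Rightarrow> real"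
  assumes G_eq: "\<And>x. complex_of_real (G x) = (\<Sum>k<N. \<Sum>l<N. C k l * cis (2 * pi * (real k - real l) * x))"
    and G_le: "AE x in M. G x \<le> \<eta>"
    and diag: "(\<Sum>k<N. C k k) = 1"
    and coeff: "\<And>k l. k < N \<Longrightarrow> l < N \<Longrightarrow> k \<noteq> l \<Longrightarrow> cmod (C k l) \<le> w k l"
    and fourier: "\<And>j::nat. 1 \<le> j \<Longrightarrow> cmod (fourier_measure M (real j)) \<le> \<delta>"
  shows "1 - \<eta> \<le> \<delta> * (\<Sum>k<N. \<Sum>l\<in>{..<N} - {k}. w k l)"
proof -
  define T where "T k l = C k l * fourier_measure M (real l - real k)" for k l
  define R where "R = (\<Sum>k<N. \<Sum>l\<in>{..<N} - {k}. T k l)"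
  have "integral\<^sup>L M (\<lambda>x. complex_of_real (G x)) = (\<Sum>k<N. \<Sum>l<N. T k l)"
    unfolding G_eq T_def by (rule integral_trig_poly)
  also have "\<dots> = (\<Sum>k<N. T k k + (\<Sum>l\<in>{..<N} - {k}. T k l))"
    by (intro sum.cong refl) (simp add: sum.remove)
  also have "\<dots> = 1 + R"
    by (simp add: sum.distrib R_def T_def fourier_measure_0 diag)
  finally have integral_G: "integral\<^sup>L M (\<lambda>x. complex_of_real (G x)) = 1 + R" .
  have "integrable M (\<lambda>x. Re (complex_of_real (G x)))"
    unfolding G_eq
    by (intro integrable_Re Bochner_Integration.integrable_sum integrable_mult_right integrable_cis)
  then have "integral\<^sup>L M G \<le> integral\<^sup>L M (\<lambda>_. \<eta>)"
    using G_le by (intro integral_mono_AE) auto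
  moreover have "integral\<^sup>L M G = 1 + Re R"
    using arg_cong[OF integral_G, of Re] by simp
  ultimately have "1 + Re R \<le> \<eta>"
    using prob_space by simp
  have "cmod R \<le> (\<Sum>k<N. \<Sum>l\<in>{..<N} - {k}. cmod (T k l))"
    unfolding R_def by (rule order_trans[OF norm_sum sum_mono[OF norm_sum]])
  also have "\<dots> \<le> (\<Sum>k<N. \<Sum>l\<in>{..<N} - {k}. w k l * \<delta>)"
    unfolding T_def norm_mult
    by (intro sum_mono mult_mono' coeff norm_fourier_measure_int_le fourier) auto
  finally show ?thesis
    using \<open>1 + Re R \<le> \<eta>\<close> abs_Re_le_cmod[of R]
    by (simp add: sum_distrib_left sum_distrib_right mult.commute)
qed

end

definition test_function :: "nat \<Rightarrow> nat \<Rightarrow> real \<Rightarrow> real \<Rightarrow> real \<Rightarrow> real" where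
  "test_function N K m h x =
     (\<Sum>a<K. \<Sum>b<K. (cmod (dirichlet_sum N (x - m - real (a + b) * h)))\<^sup>2) / (real N * (real K)\<^sup>2)"

definition test_coeff :: "nat \<Rightarrow> nat \<Rightarrow> real \<Rightarrow> real \<Rightarrow> nat \<Rightarrow> nat \<Rightarrow> complex" where
  "test_coeff N K m h k l =
     cis (- (2 * pi * (real k - real l) * m)) * (dirichlet_sum K (- (real k - real l) * h))\<^sup>2
       / complex_of_real (real N * (real K)\<^sup>2)"

lemma test_function_expansion:
  "complex_of_real (test_function N K m h x)
     = (\<Sum>k<N. \<Sum>l<N. test_coeff N K m h k l * cis (2 * pi * (real k - real l) * x))"
proof -
  define d where "d k l = real k - real l" for k l :: nat
  have cis_split: "cis (2 * pi * d k l * (x - m - real (a + b) * h))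
      = cis (2 * pi * d k l * x) * cis (- (2 * pi * d k l * m))
        * (cis (2 * pi * real a * (- d k l * h)) * cis (2 * pi * real b * (- d k l * h)))" for a b k l
    by (simp add: cis_mult algebra_simps)
  have "(\<Sum>a<K. \<Sum>b<K. complex_of_real ((cmod (dirichlet_sum N (x - m - real (a + b) * h)))\<^sup>2))
      = (\<Sum>a<K. \<Sum>b<K. \<Sum>k<N. \<Sum>l<N. cis (2 * pi * d k l * x) * cis (- (2 * pi * d k l * m))
          * (cis (2 * pi * real a * (- d k l * h)) * cis (2 * pi * real b * (- d k l * h))))"
    by (simp only: norm_dirichlet_sum_squared d_def[symmetric] cis_split)
  also have "\<dots> = (\<Sum>k<N. \<Sum>l<N. \<Sum>a<K. \<Sum>b<K. cis (2 * pi * d k l * x) * cis (- (2 * pi * d k l * m))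
          * (cis (2 * pi * real a * (- d k l * h)) * cis (2 * pi * real b * (- d k l * h))))"
    by (rule sum_swap_4)
  also have "\<dots> = (\<Sum>k<N. \<Sum>l<N. cis (2 * pi * d k l * x) * cis (- (2 * pi * d k l * m))
          * (dirichlet_sum K (- d k l * h))\<^sup>2)"
    by (simp only: dirichlet_sum_square sum_distrib_left)
  finally have sum_eq: "(\<Sum>a<K. \<Sum>b<K. complex_of_real ((cmod (dirichlet_sum N (x - m - real (a + b) * h)))\<^sup>2))
      = (\<Sum>k<N. \<Sum>l<N. cis (2 * pi * d k l * x) * cis (- (2 * pi * d k l * m))
          * (dirichlet_sum K (- d k l * h))\<^sup>2)" .
  have "complex_of_real (test_function N K m h x)
      = (\<Sum>a<K. \<Sum>b<K. complex_of_real ((cmod (dirichlet_sum N (x - m - real (a + b) * h)))\<^sup>2))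
        / complex_of_real (real N * (real K)\<^sup>2)"
    unfolding test_function_def of_real_divide of_real_sum ..
  also have "\<dots> = (\<Sum>k<N. \<Sum>l<N. cis (2 * pi * d k l * x) * cis (- (2 * pi * d k l * m))
          * (dirichlet_sum K (- d k l * h))\<^sup>2) / complex_of_real (real N * (real K)\<^sup>2)"
    unfolding sum_eq ..
  finally show ?thesis
    by (simp add: test_coeff_def d_def sum_divide_distrib mult_ac)
qed

lemma test_coeff_diag:
  assumes "1 \<le> K"
  shows "test_coeff N K m h k k = 1 / of_nat N"
  using assms by (simp add: test_coeff_def power2_eq_square)

lemma norm_test_coeff_le:
  assumes "1 \<le> K" "0 < h" "pi * real N * h \<le> \<tau>" "\<tau> < 1" "k < N" "l < N" "k \<noteq> l"
  shows "cmod (test_coeff N K m h k l)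
           \<le> min 1 ((1 / (real K * pi * h * (1 - \<tau>)))\<^sup>2 / (real k - real l)\<^sup>2) / real N"
proof -
  define d where "d = real k - real l"
  define D where "D = cmod (dirichlet_sum K (- d * h))"
  have K: "0 < real K"
    using assms by simp
  have "\<bar>d\<bar> \<le> real N"
    using assms by (auto simp: d_def)
  have "pi * \<bar>- d * h\<bar> = pi * h * \<bar>d\<bar>"
    using assms by (simp add: abs_mult)
  also have "\<dots> \<le> pi * h * real N"
    using \<open>\<bar>d\<bar> \<le> real N\<close> assms by (intro mult_left_mono) auto
  also have "\<dots> \<le> \<tau>"
    using assms by (simp add: mult_ac)
  finally have "pi * \<bar>- d * h\<bar> \<le> \<tau>" .
  then have "D \<le> 1 / (pi * \<bar>- d * h\<bar> * (1 - \<tau>))"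
    unfolding D_def using assms by (intro norm_dirichlet_sum_le_small_freq) (auto simp: d_def)
  then have "D / real K \<le> 1 / (pi * \<bar>- d * h\<bar> * (1 - \<tau>)) / real K"
    by (rule divide_right_mono) simp
  also have "\<dots> = (1 / (real K * pi * h * (1 - \<tau>))) / \<bar>d\<bar>"
    using assms by (simp add: abs_mult mult_ac)
  finally have "D / real K \<le> (1 / (real K * pi * h * (1 - \<tau>))) / \<bar>d\<bar>" .
  then have "(D / real K)\<^sup>2 \<le> ((1 / (real K * pi * h * (1 - \<tau>))) / \<bar>d\<bar>)\<^sup>2"
    by (rule power_mono) (simp add: D_def)
  then have "(D / real K)\<^sup>2 \<le> (1 / (real K * pi * h * (1 - \<tau>)))\<^sup>2 / d\<^sup>2"
    by (simp add: power_divide power_mult_distrib)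
  moreover have "(D / real K)\<^sup>2 \<le> 1"
    using K norm_dirichlet_sum_le[of K "- d * h"] by (simp add: D_def power_le_one)
  moreover have "cmod (test_coeff N K m h k l) = (D / real K)\<^sup>2 / real N"
    by (simp add: test_coeff_def D_def d_def norm_mult norm_divide norm_power power_divide)
  ultimately show ?thesis
    by (simp add: d_def divide_right_mono)
qed

lemma test_function_le:
  assumes "1 \<le> K" "0 < m" "0 \<le> h" "2 * real K * h \<le> \<epsilon> - 2 * m" "\<epsilon> \<le> x" "x \<le> 1"
  shows "test_function N K m h x \<le> 1 / (real N * (sin (pi * m))\<^sup>2)"
proof -
  have "0 \<le> 2 * real K * h"
    using assms by simp
  then have "m < 1"
    using assms by linarith
  then have "0 < sin (pi * m)"
    using assms by (intro sin_gt_zero) auto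
  have term_le: "(cmod (dirichlet_sum N (x - m - real (a + b) * h)))\<^sup>2 \<le> 1 / (sin (pi * m))\<^sup>2"
    if "a < K" "b < K" for a b
  proof -
    define y where "y = x - m - real (a + b) * h"
    have "real (a + b) * h \<le> 2 * real K * h"
      using that assms by (intro mult_right_mono) auto
    moreover have "0 \<le> real (a + b) * h"
      using assms by simp
    ultimately have "m \<le> y" "y \<le> 1 - m"
      using assms unfolding y_def by linarith+
    then have "sin (pi * m) \<le> sin (pi * y)"
      using assms by (intro sin_pi_ge_on_margin) auto
    then have "cmod (dirichlet_sum N y) \<le> 1 / sin (pi * m)"
      using \<open>0 < sin (pi * m)\<close> norm_dirichlet_sum_le_inverse_sin[of y N]
      by (smt (verit) frac_le)
    then have "(cmod (dirichlet_sum N y))\<^sup>2 \<le> (1 / sin (pi * m))\<^sup>2"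
      by (rule power_mono) simp
    then show ?thesis
      by (simp add: y_def power_divide)
  qed
  have "(\<Sum>a<K. \<Sum>b<K. (cmod (dirichlet_sum N (x - m - real (a + b) * h)))\<^sup>2)
      \<le> (\<Sum>a<K. \<Sum>b<K. 1 / (sin (pi * m))\<^sup>2)"
    by (intro sum_mono term_le) auto
  also have "\<dots> = (real K)\<^sup>2 * (1 / (sin (pi * m))\<^sup>2)"
    by (simp add: power2_eq_square)
  finally show ?thesis
    using assms unfolding test_function_def
    by (cases "N = 0") (auto simp: divide_right_mono field_simps)
qed

lemma (in real_distribution) fourier_bound_via_test_function:
  assumes support: "measure M {\<epsilon>..1} = 1"
    and fourier: "\<And>j::nat. 1 \<le> j \<Longrightarrow> cmod (fourier_measure M (real j)) \<le> \<delta>"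
    and "1 \<le> N" "1 \<le> K" "0 < m" "2 * m < \<epsilon>" "\<tau> < 1"
    and "pi * real N * ((\<epsilon> - 2 * m) / (2 * real K)) \<le> \<tau>"
  shows "1 - 1 / (real N * (sin (pi * m))\<^sup>2) \<le> \<delta> * (4 * (2 / (pi * (\<epsilon> - 2 * m) * (1 - \<tau>))) + 2)"
proof -
  define h where "h = (\<epsilon> - 2 * m) / (2 * real K)"
  define s where "s = 1 / (real K * pi * h * (1 - \<tau>))"
  define w where "w k l = min 1 (s\<^sup>2 / (real k - real l)\<^sup>2) / real N" for k l :: nat
  have "0 < h" "2 * real K * h = \<epsilon> - 2 * m" "pi * real N * h \<le> \<tau>"
    using assms by (auto simp: h_def)
  have s_eq: "s = 2 / (pi * (\<epsilon> - 2 * m) * (1 - \<tau>))"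
    using assms by (simp add: s_def h_def)
  have "0 < s"
    using assms by (simp add: s_eq)
  have "AE x in M. x \<in> {\<epsilon>..1}"
    using support by (intro AE_prob_1) simp
  then have "AE x in M. test_function N K m h x \<le> 1 / (real N * (sin (pi * m))\<^sup>2)"
    by eventually_elim
       (use assms \<open>0 < h\<close> \<open>2 * real K * h = \<epsilon> - 2 * m\<close> in \<open>auto intro!: test_function_le\<close>)
  moreover have "(\<Sum>k<N. test_coeff N K m h k k) = 1"
    using assms by (simp add: test_coeff_diag)
  moreover have "cmod (test_coeff N K m h k l) \<le> w k l" if "k < N" "l < N" "k \<noteq> l" for k l
    unfolding w_def s_def
    using assms that \<open>0 < h\<close> \<open>pi * real N * h \<le> \<tau>\<close> by (intro norm_test_coeff_le) auto
  ultimately have "1 - 1 / (real N * (sin (pi * m))\<^sup>2) \<le> \<delta> * (\<Sum>k<N. \<Sum>l\<in>{..<N} - {k}. w k l)"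
    by (intro trig_poly_duality[OF test_function_expansion] fourier) auto
  also have "\<dots> \<le> \<delta> * (\<Sum>k<N. 2 * (2 * s + 1) / real N)"
  proof (rule mult_left_mono)
    show "0 \<le> \<delta>"
      using fourier[of 1] norm_ge_zero order_trans by blast
    have "(\<Sum>l\<in>{..<N} - {k}. w k l) \<le> 2 * (2 * s + 1) / real N" if "k < N" for k
    proof -
      have "(\<Sum>l\<in>{..<N} - {k}. min 1 (s\<^sup>2 / (real k - real l)\<^sup>2))
          \<le> 2 * (\<Sum>j\<in>{1..N}. min 1 (s\<^sup>2 / (real j)\<^sup>2))"
        using sum_off_diagonal_le_twice[of "\<lambda>t. min 1 (s\<^sup>2 / t)", OF _ that] by simp
      also have "\<dots> \<le> 2 * (2 * s + 1)"
        using sum_min_inverse_square_le[OF \<open>0 < s\<close>, of N] by simp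
      finally show ?thesis
        by (simp add: w_def divide_right_mono flip: sum_divide_distrib)
    qed
    then show "(\<Sum>k<N. \<Sum>l\<in>{..<N} - {k}. w k l) \<le> (\<Sum>k<N. 2 * (2 * s + 1) / real N)"
      by (intro sum_mono) auto
  qed
  also have "\<dots> = \<delta> * (4 * s + 2)"
    using assms by simp
  finally show ?thesis
    by (simp add: s_eq)
qed

lemma cubic_slack_bound:
  fixes \<epsilon> \<sigma> \<delta> :: real
  assumes "0 < \<epsilon>" "0 < \<sigma>" "\<sigma> < 1" and slack: "1 - \<sigma> \<le> \<delta> * (8 / (pi * \<epsilon> * (1 - \<sigma>)\<^sup>2) + 2)"
  shows "(1 - \<sigma>) ^ 3 * (pi * \<epsilon> / (8 + 2 * pi * \<epsilon>)) \<le> \<delta>"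
proof -
  have q: "0 < (1 - \<sigma>)\<^sup>2" "(1 - \<sigma>)\<^sup>2 \<le> 1"
    using assms by (auto simp: power_le_one)
  have "0 < \<delta>"
    using assms q by (smt (verit) divide_pos_pos mult_nonpos_nonneg pi_gt_zero mult_pos_pos)
  have "8 / (pi * \<epsilon> * (1 - \<sigma>)\<^sup>2) + 2 \<le> (8 + 2 * pi * \<epsilon>) / (pi * \<epsilon> * (1 - \<sigma>)\<^sup>2)"
    using assms q by (simp add: add_divide_distrib le_divide_eq)
  then have "1 - \<sigma> \<le> \<delta> * ((8 + 2 * pi * \<epsilon>) / (pi * \<epsilon> * (1 - \<sigma>)\<^sup>2))"
    using slack \<open>0 < \<delta>\<close> by (meson mult_left_mono less_imp_le order_trans)
  moreover have A: "0 < 8 + 2 * pi * \<epsilon>" and B: "0 < pi * \<epsilon> * (1 - \<sigma>)\<^sup>2"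
    using assms q by (simp_all add: add_pos_pos)
  ultimately have "(1 - \<sigma>) * (pi * \<epsilon> * (1 - \<sigma>)\<^sup>2) \<le> \<delta> * (8 + 2 * pi * \<epsilon>)"
    by (simp add: pos_le_divide_eq)
  have "(1 - \<sigma>) ^ 3 * (pi * \<epsilon> / (8 + 2 * pi * \<epsilon>))
      = (1 - \<sigma>) * (pi * \<epsilon> * (1 - \<sigma>)\<^sup>2) / (8 + 2 * pi * \<epsilon>)"
    by (simp add: power2_eq_square power3_eq_cube)
  also have "\<dots> \<le> \<delta> * (8 + 2 * pi * \<epsilon>) / (8 + 2 * pi * \<epsilon>)"
    using \<open>(1 - \<sigma>) * (pi * \<epsilon> * (1 - \<sigma>)\<^sup>2) \<le> \<delta> * (8 + 2 * pi * \<epsilon>)\<close> A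
    by (intro divide_right_mono) auto
  also have "\<dots> = \<delta>"
    using A by simp
  finally show ?thesis .
qed

context real_distribution
begin

lemma fourier_bound_with_slack:
  assumes support: "measure M {\<epsilon>..1} = 1"
    and fourier: "\<And>j::nat. 1 \<le> j \<Longrightarrow> cmod (fourier_measure M (real j)) \<le> \<delta>"
    and "0 < \<epsilon>" "\<epsilon> \<le> 1" "0 < \<sigma>" "\<sigma> < 1"
  shows "(1 - \<sigma>) ^ 3 * (pi * \<epsilon> / (8 + 2 * pi * \<epsilon>)) \<le> \<delta>"
proof -
  define m where "m = \<sigma> * \<epsilon> / 2"
  have "0 < m" "2 * m < \<epsilon>" "\<epsilon> - 2 * m = \<epsilon> * (1 - \<sigma>)"
    using assms by (auto simp: m_def algebra_simps)
  have "0 < sin (pi * m)"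
    using assms \<open>2 * m < \<epsilon>\<close> \<open>0 < m\<close> by (intro sin_gt_zero) auto
  (* N makes the error 1/(N sin^2(pi m)) at most sigma; K then makes the shift step fine enough
     that pi N h <= sigma. *)
  define N where "N = nat \<lceil>1 / (\<sigma> * (sin (pi * m))\<^sup>2)\<rceil> + 1"
  define K where "K = nat \<lceil>pi * real N / \<sigma>\<rceil> + 1"
  have "1 \<le> N" "1 \<le> K"
    by (simp_all add: N_def K_def)
  have "1 / (\<sigma> * (sin (pi * m))\<^sup>2) \<le> real N" "pi * real N / \<sigma> \<le> real K"
    unfolding N_def K_def by linarith+
  then have sin_term: "1 / (real N * (sin (pi * m))\<^sup>2) \<le> \<sigma>"
    using assms \<open>0 < sin (pi * m)\<close> \<open>1 \<le> N\<close> by (simp add: field_simps)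
  have "(\<epsilon> - 2 * m) / (2 * real K) \<le> 2 / (2 * real K)"
    using assms \<open>0 < m\<close> by (intro divide_right_mono) auto
  then have step_le: "(\<epsilon> - 2 * m) / (2 * real K) \<le> 1 / real K"
    by simp
  have "pi * real N * ((\<epsilon> - 2 * m) / (2 * real K)) \<le> pi * real N / real K"
    using mult_left_mono[OF step_le, of "pi * real N"] by simp
  also have "\<dots> \<le> \<sigma>"
    using \<open>pi * real N / \<sigma> \<le> real K\<close> assms \<open>1 \<le> K\<close> by (simp add: field_simps)
  finally have "1 - 1 / (real N * (sin (pi * m))\<^sup>2)
      \<le> \<delta> * (4 * (2 / (pi * (\<epsilon> - 2 * m) * (1 - \<sigma>))) + 2)"
    using assms \<open>1 \<le> N\<close> \<open>1 \<le> K\<close> \<open>0 < m\<close> \<open>2 * m < \<epsilon>\<close>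
    by (intro fourier_bound_via_test_function support fourier) auto
  also have "4 * (2 / (pi * (\<epsilon> - 2 * m) * (1 - \<sigma>))) = 8 / (pi * \<epsilon> * (1 - \<sigma>)\<^sup>2)"
    using \<open>\<epsilon> - 2 * m = \<epsilon> * (1 - \<sigma>)\<close> by (simp add: power2_eq_square mult_ac)
  finally show ?thesis
    using assms sin_term by (intro cubic_slack_bound) auto
qed

lemma fourier_sup_bound:
  assumes "measure M {\<epsilon>..1} = 1"
    and "\<And>j::nat. 1 \<le> j \<Longrightarrow> cmod (fourier_measure M (real j)) \<le> \<delta>"
    and "0 < \<epsilon>" "\<epsilon> \<le> 1"
  shows "pi * \<epsilon> / (8 + 2 * pi * \<epsilon>) \<le> \<delta>"
proof (rule field_le_mult_one_interval)
  fix z :: real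
  assume z: "0 < z" "z < 1"
  define \<sigma> where "\<sigma> = (1 - z) / 3"
  have "(1 - \<sigma>) ^ 3 = (1 - 3 * \<sigma>) + \<sigma>\<^sup>2 * (3 - \<sigma>)"
    by (simp add: power2_eq_square power3_eq_cube algebra_simps)
  moreover have "1 - 3 * \<sigma> = z"
    by (simp add: \<sigma>_def field_simps)
  moreover have "0 \<le> \<sigma>\<^sup>2 * (3 - \<sigma>)"
    using z by (simp add: \<sigma>_def)
  ultimately have "z \<le> (1 - \<sigma>) ^ 3"
    by linarith
  moreover have "(1 - \<sigma>) ^ 3 * (pi * \<epsilon> / (8 + 2 * pi * \<epsilon>)) \<le> \<delta>"
    using assms z by (intro fourier_bound_with_slack) (auto simp: \<sigma>_def)
  moreover have "0 \<le> pi * \<epsilon> / (8 + 2 * pi * \<epsilon>)"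
    using assms by simp
  ultimately show "z * (pi * \<epsilon> / (8 + 2 * pi * \<epsilon>)) \<le> \<delta>"
    by (meson mult_right_mono order_trans)
qed

end

theorem lemma1:
  fixes \<epsilon> :: real
  assumes "0 < \<epsilon>" and "\<epsilon> \<le> 1"
  shows "Inf {(SUP j\<in>{1::nat..}. cmod (fourier_measure \<mu> (real j))) | \<mu>.
            prob_space \<mu> \<and> sets \<mu> = sets borel \<and> measure \<mu> {\<epsilon>..1} = 1}
           \<ge> pi * \<epsilon> / (8 + 2 * pi * \<epsilon>)
         \<and> pi * \<epsilon> / (8 + 2 * pi * \<epsilon>) \<ge> \<epsilon> / 5"
proof
  have sup_bound: "pi * \<epsilon> / (8 + 2 * pi * \<epsilon>) \<le> (SUP j\<in>{1::nat..}. cmod (fourier_measure \<mu> (real j)))"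
    if \<mu>: "prob_space \<mu> \<and> sets \<mu> = sets borel \<and> measure \<mu> {\<epsilon>..1} = 1" for \<mu>
  proof -
    interpret real_distribution \<mu>
      using \<mu> by (simp add: real_distribution_def real_distribution_axioms_def)
    have "bdd_above ((\<lambda>j. cmod (fourier_measure \<mu> (real j))) ` {1::nat..})"
      by (rule bdd_aboveI[where M = 1]) (auto intro: norm_fourier_measure_le_1)
    then show ?thesis
      using \<mu> assms by (intro fourier_sup_bound cSUP_upper) auto
  qed
  let ?S = "{(SUP j\<in>{1::nat..}. cmod (fourier_measure \<mu> (real j))) | \<mu>.
            prob_space \<mu> \<and> sets \<mu> = sets borel \<and> measure \<mu> {\<epsilon>..1} = 1}"
  have "prob_space (return borel (1::real)) \<and> sets (return borel (1::real)) = sets borel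
      \<and> measure (return borel (1::real)) {\<epsilon>..1} = 1"
    using assms by (simp add: prob_space_return measure_return)
  then have "?S \<noteq> {}"
    by blast
  then show "Inf ?S \<ge> pi * \<epsilon> / (8 + 2 * pi * \<epsilon>)"
    by (rule cInf_greatest) (use sup_bound in blast)
  have "8 + 2 * pi * \<epsilon> \<le> 5 * pi"
    using assms pi_gt3 mult_left_mono[of \<epsilon> 1 "2 * pi"] by linarith
  then have "\<epsilon> * (8 + 2 * pi * \<epsilon>) \<le> \<epsilon> * (5 * pi)"
    using assms by (intro mult_left_mono) auto
  then show "pi * \<epsilon> / (8 + 2 * pi * \<epsilon>) \<ge> \<epsilon> / 5"
    using assms by (simp add: field_simps add_pos_pos)
qed

end
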